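(* Let $C\in\mathbb{R}^{n\times n}$ be symmetric, let $\alpha>0,\beta>0$ satisfy $\kappa:=\frac{(\alpha^2-4\alpha-2)\beta}{2\alpha^2}-\frac1\beta>0$, and let $\rho>0$ with $\rho\ge\max\{\alpha\|C\|_\infty,\beta\|C\|\}$. Let $(\tilde\sigma^k,\sigma^k,y^k)$ be generated by the ADMM-BM algorithm described in the context, with Assumption A holding. Then for all $k\ge2$ the sequence $L_\rho(\tilde\sigma^k,\sigma^k,y^k)$ is monotonically non-increasing and $$L_\rho(\tilde\sigma^k,\sigma^k,y^k)-L_\rho(\tilde\sigma^{k+1},\sigma^{k+1},y^{k+1})\ge\kappa\|C\|\,\|\tilde\sigma^{k+1}-\tilde\sigma^k\|_F^2+\frac\rho2\|\sigma^{k+1}-\sigma^k\|_F^2.$$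
   Context: $\langle A,B\rangle=\mathrm{Tr}(A^\top B)$, $\|\cdot\|_F$ Frobenius norm, $\|C\|$ spectral norm, $\|C\|_\infty=\max_i\sum_j|C_{ij}|$. For $\sigma\in\mathbb{R}^{n\times r}$, $\sigma_i$ is its $i$-th row; $\mathcal{M}=\{\sigma\in\mathbb{R}^{n\times r}:\|\sigma_i\|=1\ \forall i\}$. ADMM-BM with parameter $\rho$: choose $\tilde\sigma^0\in\mathcal{M}$, $\sigma^0=\tilde\sigma^0$, $y^0=C\tilde\sigma^0$. For $k=0,1,\dots$: $\gamma^k=\sigma^k-\frac1\rho(y^k+C\sigma^k)$ with rows $\gamma_i^k$; $\tilde\sigma^{k+1}_i=\gamma_i^k/\|\gamma_i^k\|$; $\sigma^{k+1}=\tilde\sigma^{k+1}+\frac1\rho(y^k-C\tilde\sigma^{k+1})$; $y^{k+1}=y^k+\rho(\tilde\sigma^{k+1}-\sigma^{k+1})$. Assumption A: $\gamma_i^k\neq0$ for all $i,k$. $L_\rho(\tilde\sigma,\sigma,y)=\langle C,\tilde\sigma\sigma^\top\rangle+\langle y,\tilde\sigma-\sigma\rangle+\frac\rho2\|\tilde\sigma-\sigma\|_F^2+\sum_i\mathcal{I}_{\{\|u\|=1\}}(\tilde\sigma_i)$, $\mathcal{I}_S$ the indicator function of $S$. *)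

theory Defs
  imports "HOL-Analysis.Analysis"
begin

text \<open>Matrices in R^(n x r) are rendered as real^'r^'n (rows indexed by 'n).\<close>

definition frob_inner :: "real^'c^'b \<Rightarrow> real^'c^'b \<Rightarrow> real" where
  "frob_inner A B = (\<Sum>i\<in>UNIV. \<Sum>j\<in>UNIV. A $ i $ j * B $ i $ j)"

definition frob_norm :: "real^'c^'b \<Rightarrow> real" where
  "frob_norm A = sqrt (\<Sum>i\<in>UNIV. \<Sum>j\<in>UNIV. (A $ i $ j)^2)"

definition spec_norm :: "real^'c^'b \<Rightarrow> real" where
  "spec_norm C = onorm (\<lambda>x. C *v x)"

definition inf_norm :: "real^'c^'b \<Rightarrow> real" where
  "inf_norm C = Max (range (\<lambda>i. \<Sum>j\<in>UNIV. \<bar>C $ i $ j\<bar>))"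

definition manifoldM :: "(real^'r^'n) set" where
  "manifoldM = {\<sigma>. \<forall>i. norm (\<sigma> $ i) = 1}"

text \<open>Augmented Lagrangian; the indicator term is 0 on manifoldM and +infinity outside,
  so it is rendered as an ereal-valued function.\<close>
definition L_rho :: "real \<Rightarrow> real^'n^'n \<Rightarrow> real^'r^'n \<Rightarrow> real^'r^'n \<Rightarrow> real^'r^'n \<Rightarrow> ereal" where
  "L_rho \<rho> C st s y =
     (if st \<in> manifoldM then
        ereal (frob_inner C (st ** transpose s) + frob_inner y (st - s)
               + \<rho> / 2 * (frob_norm (st - s))^2)
      else \<infinity>)"

end

theory Submission
  imports Defs
begin

(* Along the iteration y^k = C st^k, hence s^(k+1) = st^(k+1) + (C st^k - C st^(k+1)) / rho.
   For k >= 1 every row of gamma^k therefore differs from the unit row st^k_i by at most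
   (4 N + 2 N^2 / rho) / rho with N = ||C||_inf, and rho >= alpha N gives
   ||gamma^k_i|| >= m = 1 - 4/alpha - 2/alpha^2.

   The decrease of L_rho over one iteration splits along the three block updates.  The st-update
   projects each row of gamma^k onto the unit sphere and gains
   sum_i rho ||gamma^k_i|| / 2 * ||st^(k+1)_i - st^k_i||^2 >= rho m / 2 * ||st^(k+1) - st^k||^2;
   the s-update minimises a quadratic of curvature rho (here C = C^T is needed) and gains
   rho / 2 * ||s^(k+1) - s^k||^2; the y-update loses ||y^(k+1) - y^k||^2 / rho
   = ||C (st^(k+1) - st^k)||^2 / rho <= ||C||^2 / rho * ||st^(k+1) - st^k||^2.
   Since rho >= beta ||C||, the net coefficient rho m / 2 - ||C||^2 / rho is at least kappa ||C||. *)

lemma frob_inner_eq_inner: "frob_inner A B = inner A B"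
  by (simp add: frob_inner_def inner_vec_def)

lemma power2_norm_vec_eq_sum: "(norm x)\<^sup>2 = (\<Sum>i\<in>UNIV. (norm (x $ i))\<^sup>2)"
  for x :: "'a::real_normed_vector^'n"
  by (simp add: norm_vec_def L2_set_def sum_nonneg)

lemma frob_norm_eq_norm: "frob_norm A = norm A"
  by (simp add: frob_norm_def norm_vec_def L2_set_def sum_nonneg)

lemma frob_inner_mult_transpose: "frob_inner C (A ** transpose B) = inner (C ** B) A"
proof -
  have "frob_inner C (A ** transpose B) = (\<Sum>i\<in>UNIV. \<Sum>j\<in>UNIV. \<Sum>k\<in>UNIV. C$i$j * B$j$k * A$i$k)"
    by (simp add: frob_inner_def matrix_matrix_mult_def transpose_def sum_distrib_left mult_ac)
  also have "\<dots> = (\<Sum>i\<in>UNIV. \<Sum>k\<in>UNIV. \<Sum>j\<in>UNIV. C$i$j * B$j$k * A$i$k)"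
    by (rule sum.cong[OF refl], rule sum.swap)
  also have "\<dots> = inner (C ** B) A"
    by (simp add: inner_vec_def matrix_matrix_mult_def sum_distrib_right)
  finally show ?thesis .
qed

lemma inner_matrix_eq_sum_columns:
  fixes X Y :: "real^'c^'r"
  shows "inner X Y = (\<Sum>k\<in>UNIV. inner (column k X) (column k Y))"
  by (simp add: inner_vec_def column_def) (rule sum.swap)

lemma column_matrix_matrix_mult: "column k (A ** X) = A *v column k X"
  by (simp add: vec_eq_iff column_def matrix_matrix_mult_def matrix_vector_mult_def)

lemma matrix_diff_ldistrib: "A ** (B - C) = A ** B - A ** (C::'a::ring_1^'p^'n)"
  by (vector matrix_matrix_mult_def sum_subtractf right_diff_distrib)

lemma inner_matrix_vector_mult_left:
  fixes A :: "real^'n^'m"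
  shows "inner (A *v x) y = inner x (transpose A *v y)"
  by (metis dot_lmul_matrix inner_commute transpose_matrix_vector)

lemma inner_matrix_mult_left:
  fixes A :: "real^'n^'m" and X :: "real^'c^'n"
  shows "inner (A ** X) Y = inner X (transpose A ** Y)"
  by (simp add: inner_matrix_eq_sum_columns column_matrix_matrix_mult inner_matrix_vector_mult_left)

lemma power2_norm_matrix_eq_sum_columns:
  fixes X :: "real^'c^'r"
  shows "(norm X)\<^sup>2 = (\<Sum>k\<in>UNIV. (norm (column k X))\<^sup>2)"
  by (simp add: power2_norm_eq_inner inner_matrix_eq_sum_columns)

lemma spec_norm_nonneg: "0 \<le> spec_norm C"
  unfolding spec_norm_def by (rule onorm_pos_le) simp

lemma norm_matrix_vector_mult_le_spec_norm: "norm (C *v x) \<le> spec_norm C * norm x"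
  unfolding spec_norm_def by (rule onorm) simp

lemma norm_matrix_mult_le_spec_norm:
  fixes C :: "real^'n^'m" and X :: "real^'c^'n"
  shows "norm (C ** X) \<le> spec_norm C * norm X"
proof -
  have "(norm (C ** X))\<^sup>2 = (\<Sum>k\<in>UNIV. (norm (C *v column k X))\<^sup>2)"
    by (simp add: power2_norm_matrix_eq_sum_columns column_matrix_matrix_mult)
  also have "\<dots> \<le> (\<Sum>k\<in>UNIV. (spec_norm C * norm (column k X))\<^sup>2)"
    by (intro sum_mono power_mono norm_matrix_vector_mult_le_spec_norm) simp
  also have "\<dots> = (spec_norm C * norm X)\<^sup>2"
    by (simp add: power_mult_distrib power2_norm_matrix_eq_sum_columns sum_distrib_left)
  finally show ?thesis
    by (rule power2_le_imp_le) (simp add: spec_norm_nonneg)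
qed

lemma row_sum_le_inf_norm: "(\<Sum>j\<in>UNIV. \<bar>C $ i $ j\<bar>) \<le> inf_norm C"
  unfolding inf_norm_def by (rule Max_ge) auto

lemma inf_norm_nonneg: "0 \<le> inf_norm C"
  by (rule order_trans[OF sum_nonneg row_sum_le_inf_norm]) simp

lemma norm_row_matrix_mult_le:
  fixes C :: "real^'n^'m" and X :: "real^'r^'n"
  assumes "\<And>j. norm (X $ j) \<le> B"
  shows "norm ((C ** X) $ i) \<le> inf_norm C * B"
proof -
  have "(C ** X) $ i = (\<Sum>j\<in>UNIV. C $ i $ j *\<^sub>R X $ j)"
    by (simp add: vec_eq_iff matrix_matrix_mult_def sum_component)
  then have "norm ((C ** X) $ i) \<le> (\<Sum>j\<in>UNIV. norm (C $ i $ j *\<^sub>R X $ j))"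
    by (metis norm_sum)
  also have "\<dots> = (\<Sum>j\<in>UNIV. \<bar>C $ i $ j\<bar> * norm (X $ j))"
    by simp
  also have "\<dots> \<le> (\<Sum>j\<in>UNIV. \<bar>C $ i $ j\<bar>) * B"
    by (simp add: sum_distrib_right sum_mono mult_left_mono assms)
  also have "\<dots> \<le> inf_norm C * B"
    using row_sum_le_inf_norm order_trans[OF norm_ge_zero assms] by (rule mult_right_mono)
  finally show ?thesis .
qed

lemma norm_manifoldM: "t \<in> manifoldM \<Longrightarrow> norm t = sqrt (real CARD('n))"
  for t :: "real^'r^'n"
  by (simp add: manifoldM_def norm_vec_def L2_set_def)

lemma inner_sgn_minus_inner_unit:
  fixes g u :: "'a::real_inner"
  assumes "norm u = 1"
  shows "inner g (sgn g) - inner g u = norm g / 2 * (norm (sgn g - u))\<^sup>2"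
proof (cases "g = 0")
  case False
  have dist: "(norm (sgn g - u))\<^sup>2 = 2 - 2 * inner (sgn g) u"
    using False assms by (simp add: power2_norm_eq_inner inner_diff inner_commute)
      (simp add: dot_square_norm norm_sgn)
  have "g = norm g *\<^sub>R sgn g"
    using False by (simp add: sgn_div_norm)
  then have scale: "inner g v = norm g * inner (sgn g) v" for v
    by (metis inner_scaleR_left)
  have "inner (sgn g) (sgn g) = 1"
    using False by (simp add: dot_square_norm norm_sgn)
  then show ?thesis
    unfolding dist scale by (simp add: algebra_simps)
qed simp

definition aug_lagrangian ::
    "real \<Rightarrow> real^'n^'n \<Rightarrow> real^'r^'n \<Rightarrow> real^'r^'n \<Rightarrow> real^'r^'n \<Rightarrow> real" where
  "aug_lagrangian \<rho> C t s y = inner (C ** s) t + inner y (t - s) + \<rho> / 2 * (norm (t - s))\<^sup>2"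

lemma L_rho_eq_aug_lagrangian:
  "t \<in> manifoldM \<Longrightarrow> L_rho \<rho> C t s y = ereal (aug_lagrangian \<rho> C t s y)"
  unfolding L_rho_def aug_lagrangian_def frob_inner_mult_transpose
  by (simp add: frob_inner_eq_inner frob_norm_eq_norm)

lemma aug_lagrangian_diff_first_arg:
  assumes "norm t = norm t'"
  shows "aug_lagrangian \<rho> C t s y - aug_lagrangian \<rho> C t' s y
    = inner (C ** s + y - \<rho> *\<^sub>R s) (t - t')"
proof -
  have "inner t t = inner t' t'"
    using assms by (simp add: dot_square_norm)
  then show ?thesis
    by (simp add: aug_lagrangian_def power2_norm_eq_inner inner_diff inner_add inner_commute algebra_simps)
qed

lemma aug_lagrangian_diff_second_arg:
  assumes "transpose C = C" and "C ** t - y = \<rho> *\<^sub>R (t - s')"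
  shows "aug_lagrangian \<rho> C t s y - aug_lagrangian \<rho> C t s' y = \<rho> / 2 * (norm (s - s'))\<^sup>2"
proof -
  have "C ** t = y + \<rho> *\<^sub>R (t - s')"
    using assms(2) by (simp add: algebra_simps)
  then have "inner (C ** v) t = inner v (y + \<rho> *\<^sub>R (t - s'))" for v
    using assms(1) inner_matrix_mult_left[of C v t] by simp
  then show ?thesis
    by (simp add: aug_lagrangian_def power2_norm_eq_inner inner_diff inner_add inner_commute algebra_simps)
qed

locale admm_bm =
  fixes C :: "real^'n^'n" and \<rho> :: real and st s y \<gamma> :: "nat \<Rightarrow> real^'r^'n"
  assumes C_symmetric: "transpose C = C"
    and rho_pos: "\<rho> > 0"
    and st_0: "st 0 \<in> manifoldM"
    and y_0: "y 0 = C ** st 0"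
    and gamma_eq: "\<And>k. \<gamma> k = s k - (1/\<rho>) *\<^sub>R (y k + C ** s k)"
    and gamma_nonzero: "\<And>k i. \<gamma> k $ i \<noteq> 0"
    and st_Suc: "\<And>k i. st (Suc k) $ i = (1 / norm (\<gamma> k $ i)) *\<^sub>R (\<gamma> k $ i)"
    and s_Suc: "\<And>k. s (Suc k) = st (Suc k) + (1/\<rho>) *\<^sub>R (y k - C ** st (Suc k))"
    and y_Suc: "\<And>k. y (Suc k) = y k + \<rho> *\<^sub>R (st (Suc k) - s (Suc k))"
begin

lemma st_Suc_sgn: "st (Suc k) $ i = sgn (\<gamma> k $ i)"
  by (simp add: st_Suc sgn_div_norm divide_inverse_commute)

lemma y_eq_C_st: "y k = C ** st k"
proof (cases k)
  case (Suc j)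
  then show ?thesis
    using rho_pos by (simp add: y_Suc s_Suc algebra_simps)
qed (simp add: y_0)

lemma s_Suc_eq: "s (Suc k) = st (Suc k) + (1/\<rho>) *\<^sub>R (C ** st k - C ** st (Suc k))"
  by (simp add: s_Suc y_eq_C_st)

lemma st_in_manifoldM: "st k \<in> manifoldM"
  using st_0 by (cases k) (simp_all add: manifoldM_def st_Suc_sgn norm_sgn gamma_nonzero)

lemma norm_row_st: "norm (st k $ i) = 1"
  using st_in_manifoldM by (simp add: manifoldM_def)

lemma norm_row_C_st_le: "norm ((C ** st k) $ i) \<le> inf_norm C"
  using norm_row_matrix_mult_le[of "st k" 1 C i] by (simp add: norm_row_st)

lemma norm_row_s_Suc_le: "norm (s (Suc k) $ i) \<le> 1 + 2 * inf_norm C / \<rho>"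
proof -
  have "s (Suc k) $ i = st (Suc k) $ i + (1/\<rho>) *\<^sub>R ((C ** st k) $ i - (C ** st (Suc k)) $ i)"
    by (simp add: s_Suc_eq)
  then have "norm (s (Suc k) $ i)
      \<le> norm (st (Suc k) $ i) + norm ((1/\<rho>) *\<^sub>R ((C ** st k) $ i - (C ** st (Suc k)) $ i))"
    by (metis norm_triangle_ineq)
  also have "\<dots> \<le> 1 + 2 * inf_norm C / \<rho>"
  proof -
    have "norm ((C ** st k) $ i - (C ** st (Suc k)) $ i) \<le> 2 * inf_norm C"
      using norm_triangle_ineq4[of "(C ** st k) $ i" "(C ** st (Suc k)) $ i"] norm_row_C_st_le[of k i]
        norm_row_C_st_le[of "Suc k" i] by linarith
    then show ?thesis
      using rho_pos by (simp add: norm_row_st divide_right_mono)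
  qed
  finally show ?thesis .
qed

lemma norm_row_gamma_Suc_ge:
  "1 - 4 * (inf_norm C / \<rho>) - 2 * (inf_norm C / \<rho>)\<^sup>2 \<le> norm (\<gamma> (Suc k) $ i)"
proof -
  define N where "N = inf_norm C"
  define a where "a = (C ** st (Suc k)) $ i"
  define b where "b = (C ** st k) $ i"
  define c where "c = (C ** s (Suc k)) $ i"
  have "\<gamma> (Suc k) $ i = st (Suc k) $ i - (1/\<rho>) *\<^sub>R (a + a - b + c)"
    unfolding gamma_eq y_eq_C_st a_def b_def c_def
    by (subst (1) s_Suc_eq) (simp add: algebra_simps)
  then have lower: "1 - norm (a + a - b + c) / \<rho> \<le> norm (\<gamma> (Suc k) $ i)"
    using rho_pos norm_triangle_ineq2[of "st (Suc k) $ i" "(1/\<rho>) *\<^sub>R (a + a - b + c)"]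
    by (simp add: norm_row_st divide_inverse_commute)
  have "norm (a + a - b + c) \<le> norm a + norm a + norm b + norm c"
    using norm_triangle_ineq[of "a + a - b" c] norm_triangle_ineq4[of "a + a" b]
      norm_triangle_ineq[of a a] by linarith
  also have "\<dots> \<le> N + N + N + N * (1 + 2 * N / \<rho>)"
    unfolding a_def b_def c_def N_def
    by (intro add_mono norm_row_C_st_le norm_row_matrix_mult_le[OF norm_row_s_Suc_le])
  finally have "norm (a + a - b + c) / \<rho> \<le> (N + N + N + N * (1 + 2 * N / \<rho>)) / \<rho>"
    using rho_pos by (simp add: divide_right_mono)
  also have "\<dots> = 4 * (N / \<rho>) + 2 * (N / \<rho>)\<^sup>2"
    using rho_pos by (simp add: field_simps power2_eq_square)
  finally show ?thesis
    using lower unfolding N_def by linarith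
qed

lemma st_step_decrease:
  assumes "\<And>i. m \<le> norm (\<gamma> k $ i)"
  shows "\<rho> * m / 2 * (norm (st (Suc k) - st k))\<^sup>2
    \<le> aug_lagrangian \<rho> C (st k) (s k) (y k) - aug_lagrangian \<rho> C (st (Suc k)) (s k) (y k)"
proof -
  have "aug_lagrangian \<rho> C (st k) (s k) (y k) - aug_lagrangian \<rho> C (st (Suc k)) (s k) (y k)
      = inner (C ** s k + y k - \<rho> *\<^sub>R s k) (st k - st (Suc k))"
    by (rule aug_lagrangian_diff_first_arg) (simp add: norm_manifoldM st_in_manifoldM)
  also have "\<dots> = \<rho> * (inner (\<gamma> k) (st (Suc k)) - inner (\<gamma> k) (st k))"
    using rho_pos by (simp add: gamma_eq inner_diff_right algebra_simps)
  also have "\<dots> = \<rho> * (\<Sum>i\<in>UNIV. inner (\<gamma> k $ i) (st (Suc k) $ i) - inner (\<gamma> k $ i) (st k $ i))"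
    by (simp only: inner_vec_def[of "\<gamma> k"] sum_subtractf)
  also have "\<dots> = \<rho> * (\<Sum>i\<in>UNIV. norm (\<gamma> k $ i) / 2 * (norm (st (Suc k) $ i - st k $ i))\<^sup>2)"
    by (simp add: inner_sgn_minus_inner_unit norm_row_st st_Suc_sgn)
  also have "\<dots> \<ge> \<rho> * (\<Sum>i\<in>UNIV. m / 2 * (norm (st (Suc k) $ i - st k $ i))\<^sup>2)"
    using rho_pos assms by (simp add: sum_mono mult_right_mono)
  finally show ?thesis
    unfolding power2_norm_vec_eq_sum[of "st (Suc k) - st k"] by (simp add: sum_distrib_left mult_ac)
qed

lemma s_step_decrease:
  "aug_lagrangian \<rho> C (st (Suc k)) (s k) (y k) - aug_lagrangian \<rho> C (st (Suc k)) (s (Suc k)) (y k)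
    = \<rho> / 2 * (norm (s (Suc k) - s k))\<^sup>2"
proof -
  have "C ** st (Suc k) - y k = \<rho> *\<^sub>R (st (Suc k) - s (Suc k))"
    using rho_pos by (simp add: s_Suc algebra_simps)
  then show ?thesis
    by (simp add: aug_lagrangian_diff_second_arg[OF C_symmetric] norm_minus_commute)
qed

lemma y_step_increase:
  "aug_lagrangian \<rho> C (st (Suc k)) (s (Suc k)) (y k) - aug_lagrangian \<rho> C (st (Suc k)) (s (Suc k)) (y (Suc k))
    = - (norm (C ** (st (Suc k) - st k)))\<^sup>2 / \<rho>"
proof -
  have "aug_lagrangian \<rho> C (st (Suc k)) (s (Suc k)) (y k) - aug_lagrangian \<rho> C (st (Suc k)) (s (Suc k)) (y (Suc k))
      = - inner (y (Suc k) - y k) (st (Suc k) - s (Suc k))"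
    by (simp add: aug_lagrangian_def inner_diff_left)
  also have "\<dots> = - inner (y (Suc k) - y k) (y (Suc k) - y k) / \<rho>"
    using rho_pos by (simp add: y_Suc)
  also have "y (Suc k) - y k = C ** (st (Suc k) - st k)"
    by (simp add: y_eq_C_st matrix_diff_ldistrib)
  finally show ?thesis
    by (simp add: power2_norm_eq_inner)
qed

lemma aug_lagrangian_decrease:
  assumes "\<And>i. m \<le> norm (\<gamma> k $ i)"
  shows "(\<rho> * m / 2 - (spec_norm C)\<^sup>2 / \<rho>) * (norm (st (Suc k) - st k))\<^sup>2
      + \<rho> / 2 * (norm (s (Suc k) - s k))\<^sup>2
    \<le> aug_lagrangian \<rho> C (st k) (s k) (y k) - aug_lagrangian \<rho> C (st (Suc k)) (s (Suc k)) (y (Suc k))"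
proof -
  have "(norm (C ** (st (Suc k) - st k)))\<^sup>2 \<le> (spec_norm C * norm (st (Suc k) - st k))\<^sup>2"
    by (intro power_mono norm_matrix_mult_le_spec_norm) simp
  then have "(norm (C ** (st (Suc k) - st k)))\<^sup>2 / \<rho>
      \<le> (spec_norm C)\<^sup>2 / \<rho> * (norm (st (Suc k) - st k))\<^sup>2"
    using rho_pos by (simp add: divide_right_mono power_mult_distrib)
  then show ?thesis
    using st_step_decrease[OF assms] s_step_decrease[of k] y_step_increase[of k]
    by (simp add: algebra_simps)
qed

end

lemma kappa_le_descent_coefficient:
  fixes \<alpha> \<beta> \<rho> N S :: real
  assumes "\<alpha> > 0" "\<beta> > 0" "\<rho> > 0" "0 \<le> N" "0 \<le> S" "\<alpha> * N \<le> \<rho>" "\<beta> * S \<le> \<rho>"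
    and \<kappa>_pos: "(\<alpha>\<^sup>2 - 4*\<alpha> - 2) * \<beta> / (2 * \<alpha>\<^sup>2) - 1 / \<beta> > 0"
  shows "((\<alpha>\<^sup>2 - 4*\<alpha> - 2) * \<beta> / (2 * \<alpha>\<^sup>2) - 1 / \<beta>) * S
    \<le> \<rho> * (1 - 4 * (N / \<rho>) - 2 * (N / \<rho>)\<^sup>2) / 2 - S\<^sup>2 / \<rho>"
proof -
  define m where "m = 1 - 4 * (1 / \<alpha>) - 2 * (1 / \<alpha>)\<^sup>2"
  have \<kappa>_eq: "(\<alpha>\<^sup>2 - 4*\<alpha> - 2) * \<beta> / (2 * \<alpha>\<^sup>2) - 1 / \<beta> = m * \<beta> / 2 - 1 / \<beta>"
    using assms(1) by (simp add: m_def field_simps power2_eq_square)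
  have "0 < 1 / \<beta>"
    using assms(2) by simp
  then have "0 < m * \<beta>"
    using \<kappa>_pos unfolding \<kappa>_eq by linarith
  then have "0 < m"
    using assms(2) by (simp add: zero_less_mult_iff)
  have "m \<le> 1 - 4 * (N / \<rho>) - 2 * (N / \<rho>)\<^sup>2"
  proof -
    have "N / \<rho> \<le> 1 / \<alpha>"
      using assms by (simp add: field_simps)
    moreover have "(N / \<rho>)\<^sup>2 \<le> (1 / \<alpha>)\<^sup>2"
      using assms calculation by (simp add: power_mono)
    ultimately show ?thesis
      unfolding m_def by linarith
  qed
  then have "\<beta> * S * m / 2 \<le> \<rho> * (1 - 4 * (N / \<rho>) - 2 * (N / \<rho>)\<^sup>2) / 2"
    using assms \<open>0 < m\<close> by (intro divide_right_mono mult_mono) simp_all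
  moreover have "S\<^sup>2 / \<rho> \<le> S / \<beta>"
  proof -
    have "S * (\<beta> * S) \<le> S * \<rho>"
      using assms by (simp add: mult_left_mono)
    then show ?thesis
      using assms by (simp add: field_simps power2_eq_square)
  qed
  moreover have "(m * \<beta> / 2 - 1 / \<beta>) * S = \<beta> * S * m / 2 - S / \<beta>"
    by (simp add: algebra_simps)
  ultimately show ?thesis
    unfolding \<kappa>_eq by linarith
qed

theorem lemma3:
  fixes C :: "real^'n^'n" and \<alpha> \<beta> \<rho> :: real
    and st s y \<gamma> :: "nat \<Rightarrow> real^'r^'n"
  assumes symC: "transpose C = C"
    and \<alpha>_pos: "\<alpha> > 0" and \<beta>_pos: "\<beta> > 0"
    and \<kappa>_pos: "(\<alpha>^2 - 4*\<alpha> - 2) * \<beta> / (2 * \<alpha>^2) - 1 / \<beta> > 0"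
    and \<rho>_pos: "\<rho> > 0"
    and \<rho>_ge: "\<rho> \<ge> max (\<alpha> * inf_norm C) (\<beta> * spec_norm C)"
    and init_M: "st 0 \<in> manifoldM"
    and init_s: "s 0 = st 0"
    and init_y: "y 0 = C ** st 0"
    and gamma_def: "\<And>k. \<gamma> k = s k - (1/\<rho>) *\<^sub>R (y k + C ** s k)"
    and assmA: "\<And>k i. \<gamma> k $ i \<noteq> 0"
    and st_step: "\<And>k i. st (Suc k) $ i = (1 / norm (\<gamma> k $ i)) *\<^sub>R (\<gamma> k $ i)"
    and s_step: "\<And>k. s (Suc k) = st (Suc k) + (1/\<rho>) *\<^sub>R (y k - C ** st (Suc k))"
    and y_step: "\<And>k. y (Suc k) = y k + \<rho> *\<^sub>R (st (Suc k) - s (Suc k))"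
  shows "(\<forall>k\<ge>2. L_rho \<rho> C (st (Suc k)) (s (Suc k)) (y (Suc k)) \<le> L_rho \<rho> C (st k) (s k) (y k))
    \<and> (\<forall>k\<ge>2. L_rho \<rho> C (st k) (s k) (y k) - L_rho \<rho> C (st (Suc k)) (s (Suc k)) (y (Suc k))
        \<ge> ereal (((\<alpha>^2 - 4*\<alpha> - 2) * \<beta> / (2 * \<alpha>^2) - 1 / \<beta>) * spec_norm C
                   * (frob_norm (st (Suc k) - st k))^2
                 + \<rho> / 2 * (frob_norm (s (Suc k) - s k))^2))"
proof -
  interpret admm_bm C \<rho> st s y \<gamma>
    using symC \<rho>_pos init_M init_y gamma_def assmA st_step s_step y_step by unfold_locales
  define \<kappa> where "\<kappa> = (\<alpha>^2 - 4*\<alpha> - 2) * \<beta> / (2 * \<alpha>^2) - 1 / \<beta>"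
  define m where "m = 1 - 4 * (inf_norm C / \<rho>) - 2 * (inf_norm C / \<rho>)\<^sup>2"
  have coefficient: "\<kappa> * spec_norm C \<le> \<rho> * m / 2 - (spec_norm C)\<^sup>2 / \<rho>"
    using kappa_le_descent_coefficient[OF \<alpha>_pos \<beta>_pos \<rho>_pos inf_norm_nonneg[of C]
        spec_norm_nonneg[of C]] \<rho>_ge \<kappa>_pos
    unfolding \<kappa>_def m_def by simp
  have decrease: "\<kappa> * spec_norm C * (frob_norm (st (Suc k) - st k))\<^sup>2
      + \<rho> / 2 * (frob_norm (s (Suc k) - s k))\<^sup>2
    \<le> aug_lagrangian \<rho> C (st k) (s k) (y k) - aug_lagrangian \<rho> C (st (Suc k)) (s (Suc k)) (y (Suc k))"
    if "1 \<le> k" for k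
  proof -
    \<comment> \<open>The row bound on \<gamma> k needs one completed iteration, not two.\<close>
    from \<open>1 \<le> k\<close> obtain j where "k = Suc j"
      by (cases k) auto
    then have "m \<le> norm (\<gamma> k $ i)" for i
      unfolding m_def using norm_row_gamma_Suc_ge[of j i] by simp
    from aug_lagrangian_decrease[OF this] show ?thesis
      using mult_right_mono[OF coefficient, of "(norm (st (Suc k) - st k))\<^sup>2"]
      by (simp add: frob_norm_eq_norm)
  qed
  have "0 \<le> \<kappa> * spec_norm C * (frob_norm (st (Suc k) - st k))\<^sup>2
      + \<rho> / 2 * (frob_norm (s (Suc k) - s k))\<^sup>2" for k
    using \<kappa>_pos \<rho>_pos spec_norm_nonneg[of C] unfolding \<kappa>_def[symmetric]
    by (intro add_nonneg_nonneg mult_nonneg_nonneg) simp_all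
  then have "aug_lagrangian \<rho> C (st (Suc k)) (s (Suc k)) (y (Suc k))
      \<le> aug_lagrangian \<rho> C (st k) (s k) (y k)" if "1 \<le> k" for k
    using decrease[OF that] by (smt (verit))
  then show ?thesis
    using decrease unfolding \<kappa>_def by (simp add: L_rho_eq_aug_lagrangian st_in_manifoldM)
qed

end
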